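(* Let $A$ be an $n\times n$ nonsingular real matrix, $\hat\tau>0$, $\tau=\hat\tau\|A\|_2$, and let $\widetilde A=A+M_UM_\Sigma M_V^T$ where $M_U,M_V\in\mathbb{R}^{n\times m}$ have orthonormal columns and $M_\Sigma$ is $m\times m$ diagonal with entries in $(0,\tau]$. Let $F=M_\Sigma^{1/2}M_V^TA^{-1}M_UM_\Sigma^{1/2}$ and assume $F^HF+F+F^H$ is positive semidefinite (this holds in particular if $M_V^TA^{-1}M_U$ has positive semidefinite Hermitian part). Then $\widetilde A$ is nonsingular and $$\|\widetilde A^{-1}\|_2\le(1+\hat\tau\kappa_2(A))\|A^{-1}\|_2.$$
   Context: $\|\cdot\|_2$ is the spectral norm, $\kappa_2(A)=\|A\|_2\|A^{-1}\|_2$, $F^H$ is the conjugate transpose of $F$, and the Hermitian part of a matrix $X$ is $(X+X^H)/2$. *)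

theory Defs
  imports "HOL-Analysis.Analysis"
begin

definition spec_norm :: "real^'n^'m \<Rightarrow> real" where
  "spec_norm A = onorm (\<lambda>x. A *v x)"

definition psd :: "real^'n^'n \<Rightarrow> bool" where
  "psd G \<longleftrightarrow> transpose G = G \<and> (\<forall>x. 0 \<le> x \<bullet> (G *v x))"

definition diagonal_mat :: "real^'m^'m \<Rightarrow> bool" where
  "diagonal_mat D \<longleftrightarrow> (\<forall>i j. i \<noteq> j \<longrightarrow> D $ i $ j = 0)"

definition diag_sqrt :: "real^'m^'m \<Rightarrow> real^'m^'m" where
  "diag_sqrt D = (\<chi> i j. if i = j then sqrt (D $ i $ i) else 0)"

end

theory Submission
  imports Defs
begin

text \<open>
  Write \<open>D\<close> for the square root of \<open>MS\<close>, so the perturbation is \<open>MU D D MV\<^sup>T\<close> and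
  \<open>F = D MV\<^sup>T A\<^sup>-\<^sup>1 MU D\<close>. For \<open>y = (A + MU D D MV\<^sup>T) x\<close> put \<open>z = D MV\<^sup>T x\<close>; applying
  \<open>D MV\<^sup>T A\<^sup>-\<^sup>1\<close> to \<open>y\<close> gives \<open>z + F z = D MV\<^sup>T A\<^sup>-\<^sup>1 y\<close>. Positive semidefiniteness of
  \<open>F\<^sup>T F + F + F\<^sup>T\<close> says exactly \<open>|z| \<le> |z + F z|\<close>, so \<open>|z| \<le> \<surd>\<tau> |A\<^sup>-\<^sup>1| |y|\<close>. Then
  \<open>x = A\<^sup>-\<^sup>1 y - A\<^sup>-\<^sup>1 MU D z\<close> yields \<open>|x| \<le> (1 + \<tau> |A\<^sup>-\<^sup>1|) |A\<^sup>-\<^sup>1| |y|\<close>, and a matrix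
  that is bounded below in this way is invertible with inverse of norm at most the constant.
\<close>

lemma matrix_inv_left_right:
  fixes A :: "real^'n^'n"
  assumes "invertible A"
  shows "A ** matrix_inv A = mat 1 \<and> matrix_inv A ** A = mat 1"
  using assms unfolding invertible_def matrix_inv_def by (rule someI_ex)

lemma spec_norm_nonneg: "0 \<le> spec_norm A"
  unfolding spec_norm_def by (rule onorm_pos_le) simp

lemma norm_matrix_vector_mult_le: "norm (A *v x) \<le> spec_norm A * norm x"
  unfolding spec_norm_def by (rule onorm) simp

lemma invertible_if_norm_bounded_below:
  fixes B :: "real^'n^'n"
  assumes bound: "\<And>x. norm x \<le> c * norm (B *v x)"
  shows "invertible B \<and> spec_norm (matrix_inv B) \<le> c"
proof
  have "inj ((*v) B)"
  proof (rule injI)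
    fix x1 x2 assume "B *v x1 = B *v x2"
    then have "B *v (x1 - x2) = 0" by (simp add: matrix_vector_mult_diff_distrib)
    then show "x1 = x2" using bound[of "x1 - x2"] by simp
  qed
  then show invB: "invertible B"
    using matrix_left_invertible_injective invertible_left_inverse by blast
  show "spec_norm (matrix_inv B) \<le> c"
    unfolding spec_norm_def
  proof (rule onorm_le)
    fix y
    have "B *v (matrix_inv B *v y) = y"
      using matrix_inv_left_right[OF invB] by (simp add: matrix_vector_mul_assoc)
    then show "norm (matrix_inv B *v y) \<le> c * norm y" using bound[of "matrix_inv B *v y"] by simp
  qed
qed

lemma norm_isometry_mult:
  fixes U :: "real^'m^'n"
  assumes "transpose U ** U = mat 1"
  shows "norm (U *v v) = norm v"
proof -
  have "(U *v v) v* U = v"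
    by (metis assms matrix_vector_mul_assoc matrix_vector_mul_lid transpose_matrix_vector)
  then have "inner (U *v v) (U *v v) = inner v v"
    by (metis dot_lmul_matrix)
  then show ?thesis by (simp add: norm_eq_sqrt_inner)
qed

lemma norm_transpose_isometry_le:
  fixes V :: "real^'m^'n"
  assumes "transpose V ** V = mat 1"
  shows "norm (transpose V *v x) \<le> norm x"
proof -
  define w where "w = transpose V *v x"
  have "norm w ^ 2 = inner x (V *v w)"
    by (simp add: power2_norm_eq_inner w_def dot_lmul_matrix[symmetric])
  also have "\<dots> \<le> norm x * norm w"
    using norm_cauchy_schwarz[of x "V *v w"] norm_isometry_mult[OF assms] by simp
  finally have "norm w * norm w \<le> norm x * norm w" by (simp add: power2_eq_square)
  then show ?thesis unfolding w_def[symmetric]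
    by (cases "norm w = 0") (auto simp: mult_le_cancel_right)
qed

lemma diag_sqrt_mult_vec:
  fixes D :: "real^'m^'m"
  shows "diag_sqrt D *v v = (\<chi> i. sqrt (D $ i $ i) * v $ i)"
proof -
  have "(\<Sum>j\<in>UNIV. (if i = j then sqrt (D $ i $ i) else 0) * v $ j) = sqrt (D $ i $ i) * v $ i"
    for i
    by (simp add: if_distrib[of "\<lambda>t. t * _"] cong: if_cong)
  then show ?thesis by (simp add: diag_sqrt_def matrix_vector_mult_def vec_eq_iff)
qed

lemma diag_sqrt_squared:
  fixes D :: "real^'m^'m"
  assumes "diagonal_mat D" and "\<And>i. 0 \<le> D $ i $ i"
  shows "diag_sqrt D ** diag_sqrt D = D"
proof -
  have "(D *v v) $ i = D $ i $ i * v $ i" for v i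
  proof -
    have "(D *v v) $ i = (\<Sum>j\<in>UNIV. D $ i $ j * v $ j)"
      by (simp add: matrix_vector_mult_def)
    also have "\<dots> = (\<Sum>j\<in>UNIV. if j = i then D $ i $ i * v $ i else 0)"
      using assms(1) unfolding diagonal_mat_def by (intro sum.cong) auto
    finally show ?thesis by simp
  qed
  moreover have "sqrt (D $ i $ i) * sqrt (D $ i $ i) = D $ i $ i" for i
    using assms(2)[of i] by simp
  ultimately have "diag_sqrt D ** diag_sqrt D *v v = D *v v" for v
    by (simp add: diag_sqrt_mult_vec vec_eq_iff mult.assoc[symmetric] matrix_vector_mul_assoc[symmetric])
  then show ?thesis by (metis matrix_eq)
qed

lemma norm_diag_sqrt_mult_le:
  fixes D :: "real^'m^'m"
  assumes "\<And>i. 0 \<le> D $ i $ i \<and> D $ i $ i \<le> t"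
  shows "norm (diag_sqrt D *v v) \<le> sqrt t * norm v"
proof -
  have t: "0 \<le> t" using assms by (meson order_trans)
  have "norm (diag_sqrt D *v v) ^ 2 = (\<Sum>i\<in>UNIV. D $ i $ i * (v $ i)\<^sup>2)"
    unfolding power2_norm_eq_inner
    using assms by (simp add: diag_sqrt_mult_vec inner_vec_def power2_eq_square mult_ac)
  also have "\<dots> \<le> (\<Sum>i\<in>UNIV. t * (v $ i)\<^sup>2)"
    using assms by (intro sum_mono mult_right_mono) auto
  also have "\<dots> = t * inner v v"
    by (simp add: inner_vec_def sum_distrib_left power2_eq_square)
  also have "\<dots> = (sqrt t * norm v) ^ 2"
    using t by (simp add: power_mult_distrib power2_norm_eq_inner)
  finally show ?thesis
    by (rule power2_le_imp_le) (use t in simp)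
qed

lemma psd_imp_norm_le_norm_add:
  fixes F :: "real^'m^'m"
  assumes "psd (transpose F ** F + F + transpose F)"
  shows "norm z \<le> norm (z + F *v z)"
proof -
  have transpose_inner: "inner a (b v* F) = inner (F *v a) b" for a b
    by (metis dot_lmul_matrix inner_commute)
  have "0 \<le> inner z ((transpose F ** F + F + transpose F) *v z)"
    using assms unfolding psd_def by blast
  also have "\<dots> = inner (F *v z) (F *v z) + inner z (F *v z) + inner (F *v z) z"
    by (simp add: matrix_vector_mult_add_rdistrib inner_add_right transpose_inner
        matrix_vector_mul_assoc[symmetric])
  finally have "norm z ^ 2 \<le> norm (z + F *v z) ^ 2"
    by (simp add: power2_norm_eq_inner inner_add_left inner_add_right inner_commute)
  then show ?thesis by (rule power2_le_imp_le) simp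
qed

lemma norm_le_perturbed_mult:
  fixes A :: "real^'n^'n" and U V :: "real^'m^'n" and D :: "real^'m^'m"
  assumes "invertible A"
    and U: "transpose U ** U = mat 1"
    and V: "transpose V ** V = mat 1"
    and "0 \<le> s" and D: "\<And>v. norm (D *v v) \<le> s * norm v"
    and F: "\<And>z. norm z \<le> norm (z + (D ** transpose V ** matrix_inv A ** U ** D) *v z)"
  shows "norm x \<le> (1 + s\<^sup>2 * spec_norm (matrix_inv A)) * spec_norm (matrix_inv A)
                   * norm ((A + U ** (D ** D) ** transpose V) *v x)"
proof -
  define Ai where "Ai = matrix_inv A"
  define a where "a = spec_norm Ai"
  define y where "y = (A + U ** (D ** D) ** transpose V) *v x"
  define z where "z = D *v (transpose V *v x)"
  have Ai: "norm (Ai *v v) \<le> a * norm v" for v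
    unfolding a_def by (rule norm_matrix_vector_mult_le)
  have "a \<ge> 0" unfolding a_def by (rule spec_norm_nonneg)
  have "y = A *v x + U *v (D *v z)"
    by (simp add: y_def z_def matrix_vector_mult_add_rdistrib matrix_vector_mul_assoc[symmetric])
  then have x_eq: "x = Ai *v y - Ai *v (U *v (D *v z))"
    using matrix_inv_left_right[OF assms(1)]
    by (simp add: Ai_def matrix_vector_right_distrib matrix_vector_mul_assoc)
  have "z + (D ** transpose V ** Ai ** U ** D) *v z = D *v (transpose V *v (Ai *v y))"
  proof -
    have "z = D *v (transpose V *v (Ai *v y - Ai *v (U *v (D *v z))))"
      unfolding x_eq[symmetric] by (rule z_def)
    then show ?thesis
      by (simp add: matrix_vector_mult_diff_distrib matrix_vector_mul_assoc matrix_mul_assoc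
          algebra_simps)
  qed
  then have "norm z \<le> norm (D *v (transpose V *v (Ai *v y)))"
    using F by (metis Ai_def)
  also have "\<dots> \<le> s * (a * norm y)"
    using D norm_transpose_isometry_le[OF V] Ai \<open>0 \<le> s\<close>
    by (meson mult_left_mono order_trans)
  finally have z_bound: "norm z \<le> s * (a * norm y)" .
  have "norm x \<le> norm (Ai *v y) + norm (Ai *v (U *v (D *v z)))"
    using x_eq by (metis norm_triangle_ineq4)
  also have "\<dots> \<le> a * norm y + a * norm (D *v z)"
    using Ai norm_isometry_mult[OF U] by (metis add_mono)
  also have "\<dots> \<le> a * norm y + a * (s * (s * (a * norm y)))"
    using D[of z] z_bound \<open>0 \<le> a\<close> \<open>0 \<le> s\<close>
    by (meson add_left_mono mult_left_mono order_trans)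
  also have "\<dots> = (1 + s\<^sup>2 * a) * a * norm y" by (simp add: algebra_simps power2_eq_square)
  finally show ?thesis by (simp add: a_def Ai_def y_def)
qed

theorem mainTheorem14:
  fixes A :: "real^'n^'n" and MU MV :: "real^'m^'n" and MS F :: "real^'m^'m"
    and tauh tau :: real
  assumes "invertible A"
    and "tauh > 0"
    and "tau = tauh * spec_norm A"
    and "transpose MU ** MU = mat 1"
    and "transpose MV ** MV = mat 1"
    and "diagonal_mat MS"
    and "\<forall>i. 0 < MS $ i $ i \<and> MS $ i $ i \<le> tau"
    and "F = diag_sqrt MS ** transpose MV ** matrix_inv A ** MU ** diag_sqrt MS"
    and "psd (transpose F ** F + F + transpose F)"
  shows "invertible (A + MU ** MS ** transpose MV) \<and>
         spec_norm (matrix_inv (A + MU ** MS ** transpose MV))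
           \<le> (1 + tauh * (spec_norm A * spec_norm (matrix_inv A))) * spec_norm (matrix_inv A)"
proof -
  have MS_bounds: "0 \<le> MS $ i $ i \<and> MS $ i $ i \<le> tau" for i
    using assms(7) by (simp add: less_imp_le)
  then have "0 \<le> tau" by (meson order_trans)
  have "norm x \<le> (1 + tau * spec_norm (matrix_inv A)) * spec_norm (matrix_inv A)
                   * norm ((A + MU ** MS ** transpose MV) *v x)" for x
    using norm_le_perturbed_mult[OF assms(1,4,5) real_sqrt_ge_zero[OF \<open>0 \<le> tau\<close>]
        norm_diag_sqrt_mult_le[OF MS_bounds] psd_imp_norm_le_norm_add[OF assms(9)[unfolded assms(8)]]]
      diag_sqrt_squared[OF assms(6)] MS_bounds \<open>0 \<le> tau\<close>
    by simp
  then show ?thesis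
    unfolding mult.assoc[of tauh, symmetric] assms(3)[symmetric]
    by (rule invertible_if_norm_bounded_below)
qed

end
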